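(* Let $H$ be a complex Hadamard matrix, let $\{C_1,\dots,C_t\}$ be a partition of the set of columns of $H$, and let $\{R,R_1\}$ be a partition of the set of rows of $H$. For $1\le i\le t$ let $M_{1i}$ denote the submatrix of $H$ with rows $R_1$ and columns $C_i$. Suppose that for all $i\neq j$, every column of $M_{1i}$ is orthogonal (with respect to the standard Hermitian inner product) to every column of $M_{1j}$. Then for any choice of $a_1,\dots,a_t\in\mathbb{T}$, the matrix obtained from $H$ by replacing each $M_{1i}$ by $a_iM_{1i}$ (all other entries unchanged) is a complex Hadamard matrix. In particular, for any single index $i$ and any $a\in\mathbb{T}$, replacing $M_{1i}$ by $aM_{1i}$ yields a complex Hadamard matrix.
   Context: $\mathbb{T}$ is the set of complex numbers of modulus $1$. A complex Hadamard matrix of order $n$ is an $n\times n$ matrix $H$ with all entries in $\mathbb{T}$ and $HH^{\ast}=nI_n$ (equivalently, its columns are pairwise orthogonal). *)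

theory Defs
  imports Complex_Main
begin

text \<open>An n x n complex matrix is represented as a function nat => nat => complex,
  only the entries with indices below n being relevant.\<close>

definition unit_circle :: "complex set" where
  "unit_circle = {z. cmod z = 1}"

definition complex_hadamard :: "nat \<Rightarrow> (nat \<Rightarrow> nat \<Rightarrow> complex) \<Rightarrow> bool" where
  "complex_hadamard n H \<longleftrightarrow>
     (\<forall>i<n. \<forall>j<n. H i j \<in> unit_circle) \<and>
     (\<forall>i<n. \<forall>k<n. (\<Sum>j<n. H i j * cnj (H k j)) = (if i = k then of_nat n else 0))"

end

theory Submission
  imports Defs Jordan_Normal_Form.Determinant
begin

text \<open>Scale column \<open>c\<close> on the rows \<open>R1\<close> by the unimodular \<open>b c\<close>, where \<open>b c = a\<^sub>i\<close> for \<open>c \<in> C\<^sub>i\<close>.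
  This changes the inner product of columns \<open>p\<close> and \<open>q\<close> by \<open>cnj (b p) * b q - 1\<close> times their
  partial inner product over \<open>R1\<close>, which vanishes: either \<open>b p = b q\<close>, or \<open>p\<close> and \<open>q\<close> lie in
  different blocks and are orthogonal on \<open>R1\<close>.  So \<open>H\<^sup>* H = n I\<close> is preserved, and for square
  matrices this is equivalent to \<open>H H\<^sup>* = n I\<close> (a one-sided inverse is two-sided).\<close>

lemma scaled_unitary_rows_of_cols:
  fixes G :: "nat \<Rightarrow> nat \<Rightarrow> complex"
  assumes cols: "\<forall>p<n. \<forall>q<n. (\<Sum>r<n. cnj (G r p) * G r q) = (if p = q then of_nat n else 0)"
  shows "\<forall>i<n. \<forall>k<n. (\<Sum>j<n. G i j * cnj (G k j)) = (if i = k then of_nat n else 0)"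
proof (cases "n = 0")
  case False
  define A where "A = mat n n (\<lambda>(i, j). G i j)"
  define B where "B = mat n n (\<lambda>(i, j). cnj (G j i) / of_nat n)"
  have A: "A \<in> carrier_mat n n" and B: "B \<in> carrier_mat n n"
    by (auto simp: A_def B_def)
  have "B * A = 1\<^sub>m n"
  proof (rule eq_matI)
    fix p q assume pq: "p < dim_row (1\<^sub>m n)" "q < dim_col (1\<^sub>m n)"
    have "(B * A) $$ (p, q) = (\<Sum>r<n. cnj (G r p) * G r q) / of_nat n"
      using pq by (simp add: A_def B_def scalar_prod_def sum_divide_distrib lessThan_atLeast0)
    also have "\<dots> = 1\<^sub>m n $$ (p, q)"
      using pq cols False by auto
    finally show "(B * A) $$ (p, q) = 1\<^sub>m n $$ (p, q)" .
  qed (auto simp: A_def B_def)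
  then have AB: "A * B = 1\<^sub>m n"
    using mat_mult_left_right_inverse[OF B A] by simp
  show ?thesis
  proof (intro allI impI)
    fix i k assume ik: "i < n" "k < n"
    have "(\<Sum>j<n. G i j * cnj (G k j)) / of_nat n = (A * B) $$ (i, k)"
      using ik by (simp add: A_def B_def scalar_prod_def sum_divide_distrib lessThan_atLeast0)
    also have "\<dots> = (if i = k then 1 else 0)"
      using AB ik by simp
    finally show "(\<Sum>j<n. G i j * cnj (G k j)) = (if i = k then of_nat n else 0)"
      using False by (auto simp: field_simps split: if_splits)
  qed
qed simp

lemma complex_hadamard_iff_columns:
  "complex_hadamard n H \<longleftrightarrow>
     (\<forall>i<n. \<forall>j<n. H i j \<in> unit_circle) \<and>
     (\<forall>p<n. \<forall>q<n. (\<Sum>r<n. cnj (H r p) * H r q) = (if p = q then of_nat n else 0))"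
proof -
  have "(\<forall>p<n. \<forall>q<n. (\<Sum>r<n. cnj (H r p) * H r q) = (if p = q then of_nat n else 0))"
    if rows: "\<forall>i<n. \<forall>k<n. (\<Sum>j<n. H i j * cnj (H k j)) = (if i = k then of_nat n else 0)"
  proof -
    have "\<forall>p<n. \<forall>q<n. (\<Sum>r<n. cnj (cnj (H p r)) * cnj (H q r)) = (if p = q then of_nat n else 0)"
      using rows by simp
    from scaled_unitary_rows_of_cols[OF this] show ?thesis by simp
  qed
  then show ?thesis
    unfolding complex_hadamard_def using scaled_unitary_rows_of_cols by blast
qed

lemma unit_circle_cnj_mult_self: "z \<in> unit_circle \<Longrightarrow> cnj z * z = 1"
  by (simp add: unit_circle_def complex_norm_square[symmetric] mult.commute)

lemma column_inner_rescale_rows: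
  fixes H H' :: "nat \<Rightarrow> nat \<Rightarrow> complex" and b :: "nat \<Rightarrow> complex"
  assumes R1: "R1 \<subseteq> {..<n}"
    and H': "\<forall>r<n. H' r p = (if r \<in> R1 then b p * H r p else H r p)"
            "\<forall>r<n. H' r q = (if r \<in> R1 then b q * H r q else H r q)"
  shows "(\<Sum>r<n. cnj (H' r p) * H' r q)
       = (\<Sum>r<n. cnj (H r p) * H r q) + (cnj (b p) * b q - 1) * (\<Sum>r\<in>R1. cnj (H r p) * H r q)"
proof -
  have "(\<Sum>r<n. cnj (H' r p) * H' r q - cnj (H r p) * H r q)
      = (\<Sum>r<n. if r \<in> R1 then (cnj (b p) * b q - 1) * (cnj (H r p) * H r q) else 0)"
    using H' by (intro sum.cong) (auto simp: algebra_simps)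
  also have "\<dots> = (cnj (b p) * b q - 1) * (\<Sum>r\<in>R1. cnj (H r p) * H r q)"
    using R1 by (simp add: sum.If_cases Int_absorb1 sum_distrib_left)
  finally show ?thesis
    by (simp add: sum_subtractf algebra_simps)
qed

lemma complex_hadamard_rescale_rows_on_columns:
  fixes H H' :: "nat \<Rightarrow> nat \<Rightarrow> complex" and b :: "nat \<Rightarrow> complex"
  assumes hadamard: "complex_hadamard n H"
    and R1: "R1 \<subseteq> {..<n}"
    and b: "\<forall>c<n. b c \<in> unit_circle"
    and orth: "\<forall>p<n. \<forall>q<n. b p \<noteq> b q \<longrightarrow> (\<Sum>r\<in>R1. H r p * cnj (H r q)) = 0"
    and H': "\<forall>r<n. \<forall>c<n. H' r c = (if r \<in> R1 then b c * H r c else H r c)"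
  shows "complex_hadamard n H'"
proof -
  have unit: "\<forall>i<n. \<forall>j<n. H i j \<in> unit_circle"
    and cols: "\<forall>p<n. \<forall>q<n. (\<Sum>r<n. cnj (H r p) * H r q) = (if p = q then of_nat n else 0)"
    using hadamard by (simp_all add: complex_hadamard_iff_columns)
  have "(\<Sum>r<n. cnj (H' r p) * H' r q) = (\<Sum>r<n. cnj (H r p) * H r q)"
    if pq: "p < n" "q < n" for p q
  proof -
    have rescaled: "(\<Sum>r<n. cnj (H' r p) * H' r q)
        = (\<Sum>r<n. cnj (H r p) * H r q) + (cnj (b p) * b q - 1) * (\<Sum>r\<in>R1. cnj (H r p) * H r q)"
      by (rule column_inner_rescale_rows[OF R1]) (use H' pq in auto)
    have "(cnj (b p) * b q - 1) * (\<Sum>r\<in>R1. cnj (H r p) * H r q) = 0"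
    proof (cases "b p = b q")
      case True
      then show ?thesis using b pq unit_circle_cnj_mult_self by simp
    next
      case False
      then have "(\<Sum>r\<in>R1. H r q * cnj (H r p)) = 0" using orth pq by metis
      then show ?thesis by (simp add: mult.commute)
    qed
    with rescaled show ?thesis by simp
  qed
  moreover have "\<forall>i<n. \<forall>j<n. H' i j \<in> unit_circle"
    using H' b unit by (auto simp: unit_circle_def norm_mult)
  ultimately show ?thesis
    using cols by (simp add: complex_hadamard_iff_columns)
qed

theorem theorem6p3:
  fixes n t :: nat and H :: "nat \<Rightarrow> nat \<Rightarrow> complex"
    and C :: "nat \<Rightarrow> nat set" and R R1 :: "nat set"
  assumes hadamard: "complex_hadamard n H"
    and C_nonempty: "\<forall>i<t. C i \<noteq> {}"
    and C_disjoint: "\<forall>i<t. \<forall>j<t. i \<noteq> j \<longrightarrow> C i \<inter> C j = {}"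
    and C_cover: "(\<Union>i<t. C i) = {..<n}"
    and R_nonempty: "R \<noteq> {}" and R1_nonempty: "R1 \<noteq> {}"
    and R_disjoint: "R \<inter> R1 = {}"
    and R_cover: "R \<union> R1 = {..<n}"
    and orth: "\<forall>i<t. \<forall>j<t. i \<noteq> j \<longrightarrow>
                 (\<forall>p\<in>C i. \<forall>q\<in>C j. (\<Sum>r\<in>R1. H r p * cnj (H r q)) = 0)"
  shows "(\<forall>(a :: nat \<Rightarrow> complex) H'. (\<forall>i<t. a i \<in> unit_circle) \<longrightarrow>
            (\<forall>i<t. \<forall>r<n. \<forall>c\<in>C i. H' r c = (if r \<in> R1 then a i * H r c else H r c)) \<longrightarrow>
            complex_hadamard n H')
       \<and> (\<forall>i0<t. \<forall>(a :: complex) H'. a \<in> unit_circle \<longrightarrow>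
            (\<forall>r<n. \<forall>c<n. H' r c = (if r \<in> R1 \<and> c \<in> C i0 then a * H r c else H r c)) \<longrightarrow>
            complex_hadamard n H')"
    (is "?blocks \<and> ?single")
proof
  have R1: "R1 \<subseteq> {..<n}" using R_cover by blast
  obtain blk where blk: "\<forall>c<n. blk c < t \<and> c \<in> C (blk c)"
    using C_cover by (metis UN_iff lessThan_iff)
  show blocks: ?blocks
  proof (intro allI impI)
    fix a :: "nat \<Rightarrow> complex" and H'
    assume a: "\<forall>i<t. a i \<in> unit_circle"
      and H': "\<forall>i<t. \<forall>r<n. \<forall>c\<in>C i. H' r c = (if r \<in> R1 then a i * H r c else H r c)"
    show "complex_hadamard n H'"
    proof (rule complex_hadamard_rescale_rows_on_columns[OF hadamard R1, where b = "a \<circ> blk"])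
      show "\<forall>p<n. \<forall>q<n. (a \<circ> blk) p \<noteq> (a \<circ> blk) q \<longrightarrow> (\<Sum>r\<in>R1. H r p * cnj (H r q)) = 0"
        using blk orth by (metis comp_apply)
    qed (use a H' blk in auto)
  qed
  show ?single
  proof (intro allI impI)
    fix i0 a H' assume i0: "i0 < t" and a: "a \<in> unit_circle"
      and H': "\<forall>r<n. \<forall>c<n. H' r c = (if r \<in> R1 \<and> c \<in> C i0 then a * H r c else H r c)"
    have "c < n \<and> (c \<in> C i0 \<longleftrightarrow> i = i0)" if "i < t" "c \<in> C i" for i c
      using that i0 C_cover C_disjoint by blast
    then have H'_blocks: "\<forall>i<t. \<forall>r<n. \<forall>c\<in>C i.
                 H' r c = (if r \<in> R1 then (if i = i0 then a else 1) * H r c else H r c)"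
      using H' by auto
    show "complex_hadamard n H'"
      by (rule blocks[rule_format, of "\<lambda>i. if i = i0 then a else 1" H'])
        (use a H'_blocks in \<open>auto simp: unit_circle_def\<close>)
  qed
qed

end
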